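(* Let $n\ge 3$, $0<m<\frac{n-2}{n}$, $\eta>0$, $\rho>0$, and let $\alpha,\beta$ satisfy $\alpha=\frac{2\beta+\rho}{1-m}$ and $0<\alpha\le n\beta$. Let $v$ be a solution of $$\frac{n-1}{m}\left((v^m)''+\frac{n-1}{r}(v^m)'\right)+\alpha v+\beta r v'=0,\quad v>0,\quad \text{in }(0,\infty),$$ with $v(0)=\eta$, $v'(0)=0$, and let $w(r)=r^2v(r)^{1-m}$. Then there exists a constant $C_1>0$ such that $w(r)\le C_1$ for all $r\ge 1$. *)

theory Defs
  imports Complex_Main
begin

end

theory Submission
  imports Defs
begin

text \<open>With \<open>P = r (v\<^sup>m)'/v\<^sup>m = m r v'/v\<close> and \<open>w = r\<^sup>2 v\<^sup>1\<^sup>-\<^sup>m\<close> the equation becomes the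
  first-order system \<open>r (ln w)' = (1-m) P + 2\<close>,
  \<open>r P' = -(n-2) P - m P\<^sup>2 - w (\<alpha> + \<beta> P)/(n-1)\<close>.
  The second equation keeps \<open>P\<close> below \<open>max (P 1) 0\<close>. Because \<open>(1-m) \<alpha> > 2 \<beta>\<close>, wherever
  \<open>P > -2/(1-m)\<close> and \<open>w\<close> is large we get \<open>r P' \<le> -1\<close>, so \<open>ln w + (max (P + 2/(1-m)) 0)\<^sup>2\<close>
  cannot increase there; this bounds \<open>w\<close>.\<close>

lemma DERIV_max_zero_power2:
  fixes y :: real
  shows "((\<lambda>x. (max x 0)^2) has_real_derivative 2 * max y 0) (at y)"
proof (cases y "0 :: real" rule: linorder_cases)
  case less
  have "((\<lambda>x. 0) has_real_derivative 2 * max y 0) (at y)"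
    using less by simp
  then show ?thesis
    by (rule has_field_derivative_transform_within_open[where S="{..<0}"]) (use less in auto)
next
  case equal
  have "((\<lambda>x. ((max x 0)^2 - (max y 0)^2) / (x - y)) \<longlongrightarrow> 0) (at y)"
  proof (rule tendsto_sandwich[where f="\<lambda>x. - \<bar>x\<bar>" and h="\<lambda>x. \<bar>x\<bar>"])
    show "\<forall>\<^sub>F x in at y. - \<bar>x\<bar> \<le> ((max x 0)^2 - (max y 0)^2) / (x - y)"
      and "\<forall>\<^sub>F x in at y. ((max x 0)^2 - (max y 0)^2) / (x - y) \<le> \<bar>x\<bar>"
      using equal by (auto intro!: always_eventually simp: max_def power2_eq_square abs_if)
    show "((\<lambda>x. - \<bar>x\<bar>) \<longlongrightarrow> 0) (at y)" and "((\<lambda>x. \<bar>x\<bar>) \<longlongrightarrow> 0) (at y)"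
      using equal by (auto intro!: tendsto_eq_intros)
  qed
  then show ?thesis
    using equal by (simp add: has_field_derivative_iff)
next
  case greater
  have "((\<lambda>x. x^2) has_real_derivative 2 * max y 0) (at y)"
    using greater by (auto intro!: derivative_eq_intros)
  then show ?thesis
    by (rule has_field_derivative_transform_within_open[where S="{0<..}"]) (use greater in auto)
qed

text \<open>The function \<open>(max (f t - c) 0)\<^sup>2\<close> is differentiable with nonpositive derivative,
  hence nonincreasing.\<close>

lemma DERIV_nonpos_above_level_imp_le:
  fixes f f' :: "real \<Rightarrow> real" and a b c :: real
  assumes "a \<le> b"
    and deriv: "\<And>t. a \<le> t \<Longrightarrow> t \<le> b \<Longrightarrow> (f has_real_derivative f' t) (at t)"
    and nonpos: "\<And>t. a \<le> t \<Longrightarrow> t \<le> b \<Longrightarrow> f t > c \<Longrightarrow> f' t \<le> 0"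
    and start: "f a \<le> c"
  shows "f b \<le> c"
proof -
  define G where "G t = (max (f t - c) 0)^2" for t
  have "G b \<le> G a"
  proof (rule DERIV_nonpos_imp_nonincreasing[OF \<open>a \<le> b\<close>])
    fix x assume x: "a \<le> x" "x \<le> b"
    have "(G has_real_derivative (2 * max (f x - c) 0) * f' x) (at x)"
      unfolding G_def
      by (rule DERIV_chain2[OF DERIV_max_zero_power2, where g="\<lambda>t. f t - c"])
         (auto intro!: derivative_eq_intros deriv x)
    moreover have "(2 * max (f x - c) 0) * f' x \<le> 0"
      using nonpos[OF x] by (cases "f x > c") (auto simp: mult_nonneg_nonpos)
    ultimately show "\<exists>y. DERIV G x :> y \<and> y \<le> 0" by blast
  qed
  with start show ?thesis
    by (simp add: G_def)
qed

locale radial_profile =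
  fixes n m \<alpha> \<beta> :: real and v v1 u1 u2 :: "real \<Rightarrow> real"
  assumes n_ge_2: "2 \<le> n"
    and m_pos: "0 < m" and m_less_1: "m < 1"
    and beta_pos: "0 < \<beta>" and alpha_gap: "2 * \<beta> < (1 - m) * \<alpha>"
    and v_pos: "\<And>r. 0 < r \<Longrightarrow> 0 < v r"
    and v_deriv: "\<And>r. 0 < r \<Longrightarrow> (v has_real_derivative v1 r) (at r)"
    and vm_deriv: "\<And>r. 0 < r \<Longrightarrow> ((\<lambda>s. v s powr m) has_real_derivative u1 r) (at r)"
    and vm_deriv2: "\<And>r. 0 < r \<Longrightarrow> (u1 has_real_derivative u2 r) (at r)"
    and ode: "\<And>r. 0 < r \<Longrightarrow>
      (n - 1) / m * (u2 r + (n - 1) / r * u1 r) + \<alpha> * v r + \<beta> * r * v1 r = 0"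
begin

definition w :: "real \<Rightarrow> real" where
  "w t = t^2 * v t powr (1 - m)"

definition P :: "real \<Rightarrow> real" where
  "P t = t * u1 t / (m * v t powr m)"

lemma w_pos: "0 < t \<Longrightarrow> 0 < w t"
  using v_pos[of t] by (simp add: w_def)

lemma u1_eq: "0 < r \<Longrightarrow> u1 r = m * v r powr (m - 1) * v1 r"
  using DERIV_unique[OF vm_deriv DERIV_chain2[OF has_real_derivative_powr v_deriv]] v_pos
  by (simp add: mult.assoc)

lemma P_eq: "0 < t \<Longrightarrow> P t = t * v1 t / v t"
  using v_pos[of t] m_pos by (simp add: P_def u1_eq powr_diff)

lemma P_has_derivative:
  assumes t: "0 < t"
  shows "(P has_real_derivative
           (- (n - 2) * P t - m * (P t)^2 - w t * (\<alpha> + \<beta> * P t) / (n - 1)) / t) (at t)"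
proof -
  define g where "g = v t powr m"
  have g: "0 < g" using v_pos[OF t] by (simp add: g_def)
  have "(P has_real_derivative
          ((u1 t + t * u2 t) * (m * g) - t * u1 t * (m * u1 t)) / ((m * g) * (m * g))) (at t)"
    unfolding P_def g_def using t v_pos[OF t] m_pos
    by (intro DERIV_divide DERIV_cmult vm_deriv)
       (auto intro!: derivative_eq_intros vm_deriv2 simp: mult.commute)
  moreover
  have u2: "u2 t = - (n - 1) / t * u1 t - m * (\<alpha> * v t + \<beta> * t * v1 t) / (n - 1)"
    using ode[OF t] t m_pos n_ge_2 by (simp add: field_simps)
  have v1: "v1 t = u1 t * v t / (m * g)"
    using u1_eq[OF t] v_pos[OF t] m_pos by (simp add: g_def powr_diff field_simps)
  have w: "w t = t^2 * v t / g"
    using v_pos[OF t] by (simp add: w_def g_def powr_diff)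
  have P: "P t = t * u1 t / (m * g)"
    by (simp add: P_def g_def)
  have "((u1 t + t * u2 t) * (m * g) - t * u1 t * (m * u1 t)) / ((m * g) * (m * g))
      = (- (n - 2) * P t - m * (P t)^2 - w t * (\<alpha> + \<beta> * P t) / (n - 1)) / t"
    unfolding u2 v1 w P using t g m_pos n_ge_2 by (simp add: field_simps power2_eq_square)
  ultimately show ?thesis
    by (rule DERIV_cong)
qed

lemma ln_w_has_derivative:
  assumes t: "0 < t"
  shows "((\<lambda>s. ln (w s)) has_real_derivative ((1 - m) * P t + 2) / t) (at t)"
proof -
  have "((\<lambda>s. 2 * ln s + (1 - m) * ln (v s)) has_real_derivative
          2 / t + (1 - m) * (v1 t / v t)) (at t)"
    using t v_pos[OF t] by (auto intro!: derivative_eq_intros v_deriv simp: field_simps)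
  then have "((\<lambda>s. ln (w s)) has_real_derivative 2 / t + (1 - m) * (v1 t / v t)) (at t)"
    by (rule has_field_derivative_transform_within_open[where S="{0<..}"])
       (use t in \<open>auto simp: w_def v_pos ln_mult ln_powr ln_realpow dest: v_pos\<close>)
  then show ?thesis
    using t v_pos[OF t] by (simp add: P_eq field_simps)
qed

lemma alpha_pos: "0 < \<alpha>"
  using alpha_gap beta_pos m_less_1 by (smt (verit) mult_le_0_iff)

lemma riccati_rhs_nonpos:
  assumes "0 \<le> p" "0 \<le> x"
  shows "- (n - 2) * p - m * p^2 - x * (\<alpha> + \<beta> * p) / (n - 1) \<le> 0"
proof -
  have "0 \<le> x * (\<alpha> + \<beta> * p) / (n - 1)"
    using assms alpha_pos beta_pos n_ge_2 by simp
  moreover have "0 \<le> (n - 2) * p" "0 \<le> m * p^2"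
    using assms n_ge_2 m_pos by simp_all
  ultimately show ?thesis by linarith
qed

text \<open>Once \<open>P > -2/(1-m)\<close>, the coefficient \<open>\<alpha> + \<beta> P\<close> of \<open>w\<close> stays above
  \<open>\<alpha> - 2\<beta>/(1-m) > 0\<close>, so a large \<open>w\<close> forces \<open>P\<close> to decrease at a definite rate.\<close>

lemma riccati_rhs_le_minus_one:
  obtains W where "0 < W"
    and "\<And>p x. 0 < p + 2 / (1 - m) \<Longrightarrow> W \<le> x \<Longrightarrow>
           - (n - 2) * p - m * p^2 - x * (\<alpha> + \<beta> * p) / (n - 1) \<le> -1"
proof
  define k where "k = 2 / (1 - m)"
  define c where "c = (\<alpha> - \<beta> * k) / (n - 1)"
  have "\<beta> * k < \<alpha>"
    using alpha_gap m_less_1 by (simp add: k_def field_simps)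
  then have c: "0 < c"
    using n_ge_2 by (simp add: c_def)
  have k: "0 < k"
    using m_less_1 by (simp add: k_def)
  show W: "0 < ((n - 2) * k + 1) / c"
    using c k n_ge_2 by (simp add: add_nonneg_pos)
  fix p x
  assume p: "0 < p + 2 / (1 - m)" and x: "((n - 2) * k + 1) / c \<le> x"
  have minus_p: "- p \<le> k"
    using p by (simp add: k_def)
  then have "- (n - 2) * p \<le> (n - 2) * k"
    using n_ge_2 by (metis minus_mult_commute mult_left_mono diff_ge_0_iff_ge)
  moreover have "0 \<le> m * p^2"
    using m_pos by simp
  moreover have "(n - 2) * k + 1 \<le> x * (\<alpha> + \<beta> * p) / (n - 1)"
  proof -
    have "(n - 2) * k + 1 \<le> c * x"
      using x c by (simp add: field_simps)
    also have "\<dots> = x * (\<alpha> - \<beta> * k) / (n - 1)"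
      by (simp add: c_def)
    also have "\<dots> \<le> x * (\<alpha> + \<beta> * p) / (n - 1)"
    proof -
      have "\<beta> * (- p) \<le> \<beta> * k"
        using minus_p beta_pos by (intro mult_left_mono) auto
      then show ?thesis
        using x W n_ge_2 by (intro divide_right_mono mult_left_mono) auto
    qed
    finally show ?thesis .
  qed
  ultimately show "- (n - 2) * p - m * p^2 - x * (\<alpha> + \<beta> * p) / (n - 1) \<le> -1"
    by linarith
qed

lemma P_le_max_P1:
  assumes "1 \<le> t"
  shows "P t \<le> max (P 1) 0"
proof (rule DERIV_nonpos_above_level_imp_le[OF assms])
  show "(P has_real_derivative
          (- (n - 2) * P s - m * (P s)^2 - w s * (\<alpha> + \<beta> * P s) / (n - 1)) / s) (at s)"
    if "1 \<le> s" for s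
    using P_has_derivative that by simp
  fix s assume s: "1 \<le> s" "max (P 1) 0 < P s"
  then show "(- (n - 2) * P s - m * (P s)^2 - w s * (\<alpha> + \<beta> * P s) / (n - 1)) / s \<le> 0"
    using riccati_rhs_nonpos[of "P s" "w s"] w_pos[of s] by (simp add: divide_nonpos_pos)
qed simp

lemma ln_w_bounded_above:
  obtains C where "\<And>t. 1 \<le> t \<Longrightarrow> ln (w t) \<le> C"
proof -
  obtain W where W: "0 < W"
    and riccati: "\<And>p x. 0 < p + 2 / (1 - m) \<Longrightarrow> W \<le> x \<Longrightarrow>
           - (n - 2) * p - m * p^2 - x * (\<alpha> + \<beta> * p) / (n - 1) \<le> -1"
    using riccati_rhs_le_minus_one by blast
  define k where "k = 2 / (1 - m)"
  define R where "R s = - (n - 2) * P s - m * (P s)^2 - w s * (\<alpha> + \<beta> * P s) / (n - 1)" for s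
  define H where "H x = (max (x + k) 0)^2" for x
  define \<psi> where "\<psi> t = ln (w t) + H (P t)" for t
  define C where "C = max (\<psi> 1) (ln W + H (max (P 1) 0))"
  have "\<psi> t \<le> C" if "1 \<le> t" for t
  proof (rule DERIV_nonpos_above_level_imp_le[OF that])
    fix s assume s: "1 \<le> s" "s \<le> t"
    have "((\<lambda>s. H (P s)) has_real_derivative 2 * max (P s + k) 0 * (R s / s)) (at s)"
      unfolding H_def R_def
      by (rule DERIV_chain2[OF DERIV_max_zero_power2, where g="\<lambda>s. P s + k", simplified])
         (use P_has_derivative[of s] s in \<open>auto intro!: derivative_eq_intros\<close>)
    with ln_w_has_derivative[of s] s
    show "(\<psi> has_real_derivative ((1 - m) * P s + 2) / s + 2 * max (P s + k) 0 * (R s / s)) (at s)"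
      unfolding \<psi>_def by (auto intro: DERIV_add)
    assume "C < \<psi> s"
    moreover have "H (P s) \<le> H (max (P 1) 0)"
      unfolding H_def using P_le_max_P1[OF s(1)] by (intro power_mono) auto
    ultimately have "ln W < ln (w s)"
      by (simp add: \<psi>_def C_def)
    then have large: "W \<le> w s"
      using W w_pos[of s] s by simp
    have shift: "(1 - m) * P s + 2 = (1 - m) * (P s + k)"
      using m_less_1 by (simp add: k_def field_simps)
    have "(1 - m) * P s + 2 + 2 * max (P s + k) 0 * R s \<le> 0"
    proof (cases "0 < P s + k")
      case True
      then have "2 * (P s + k) * R s \<le> 2 * (P s + k) * (-1)"
        using riccati[OF _ large] by (intro mult_left_mono) (auto simp: k_def R_def)
      moreover have "(1 - m) * (P s + k) \<le> 2 * (P s + k)"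
        using True m_pos by (intro mult_right_mono) auto
      ultimately show ?thesis
        using True shift by simp
    next
      case False
      then show ?thesis
        using shift m_less_1 by (simp add: mult_nonneg_nonpos)
    qed
    then show "((1 - m) * P s + 2) / s + 2 * max (P s + k) 0 * (R s / s) \<le> 0"
      using s by (simp add: add_divide_distrib[symmetric] divide_nonpos_pos)
  qed (simp add: C_def)
  moreover have "ln (w t) \<le> \<psi> t" for t
    by (simp add: \<psi>_def H_def)
  ultimately show ?thesis
    using that order_trans by blast
qed

lemma w_bounded_above: "\<exists>C>0. \<forall>t\<ge>1. w t \<le> C"
proof -
  obtain C where C: "\<And>t. 1 \<le> t \<Longrightarrow> ln (w t) \<le> C"
    using ln_w_bounded_above by blast
  have "w t \<le> exp C" if "1 \<le> t" for t
    using C[OF that] w_pos[of t] that by (metis exp_le_cancel_iff exp_ln less_le_trans zero_less_one)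
  then show ?thesis
    by (intro exI[of _ "exp C"]) simp
qed

end

theorem lemma2p6:
  fixes n :: nat and m \<eta> \<rho> \<alpha> \<beta> :: real
    and v v1 u1 u2 :: "real \<Rightarrow> real"
  assumes n: "n \<ge> 3"
    and m_pos: "0 < m" and m_bound: "m < (real n - 2) / real n"
    and eta: "\<eta> > 0" and rho: "\<rho> > 0"
    and alpha_def: "\<alpha> = (2 * \<beta> + \<rho>) / (1 - m)"
    and alpha_pos: "0 < \<alpha>" and alpha_le: "\<alpha> \<le> real n * \<beta>"
    and v_pos: "\<forall>r>0. v r > 0"
    and v_cont: "continuous_on {0..} v"
    and v0: "v 0 = \<eta>"
    and v_deriv: "\<forall>r>0. (v has_real_derivative v1 r) (at r)"
    and v_deriv0: "(v has_real_derivative v1 0) (at 0 within {0..})"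
    and v1_0: "v1 0 = 0"
    and vm_deriv: "\<forall>r>0. ((\<lambda>s. v s powr m) has_real_derivative u1 r) (at r)"
    and vm_deriv2: "\<forall>r>0. (u1 has_real_derivative u2 r) (at r)"
    and ode: "\<forall>r>0. (real n - 1) / m * (u2 r + (real n - 1) / r * u1 r)
                     + \<alpha> * v r + \<beta> * r * v1 r = 0"
  shows "\<exists>C1>0. \<forall>r\<ge>1. r^2 * v r powr (1 - m) \<le> C1"
proof -
  have "2 + m * real n < real n"
    using m_bound n by (simp add: field_simps)
  moreover have "real n \<le> m * real n" if "1 \<le> m"
    using mult_right_mono[OF that, of "real n"] by simp
  ultimately have m_less_1: "m < 1"
    by linarith
  have "0 < real n * \<beta>"
    using alpha_pos alpha_le by linarith
  then have beta_pos: "0 < \<beta>"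
    by (simp add: zero_less_mult_iff)
  have "2 * \<beta> < (1 - m) * \<alpha>"
    using alpha_def m_less_1 rho by simp
  with n m_pos m_less_1 beta_pos v_pos v_deriv vm_deriv vm_deriv2 ode
  interpret radial_profile "real n" m \<alpha> \<beta> v v1 u1 u2
    by unfold_locales auto
  show ?thesis
    using w_bounded_above by (simp add: w_def)
qed

end
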